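(* Let $d\ge2$ be even, let $K^\infty(t)=\frac{1}{2\pi}t(\pi-\arccos t)$, and for integers $k\ge0$ define $$a_k^d=V_d\int_{-1}^1K^\infty(t)\,P_{k,d}(t)\,(1-t^2)^{\frac{d-2}{2}}\,dt,\qquad V_d=\frac{\pi^{d/2}}{\Gamma(\frac d2+1)}.$$ Set $p=k+\frac{d-2}{2}$, $$C_1(d,k)=\frac{\pi^{d/2}}{d/2}\,\frac{(-1)^k}{2^k}\,\frac{1}{\Gamma(k+\frac d2)},\qquad C_2(q,d,k)=(-1)^q\binom{p}{q}\frac{(2q)!}{(2q-k)!}.$$ Then $$a_k^d=\begin{cases}C_1(d,0)\,\frac{1}{d\,2^{d+1}}\binom{d}{d/2}, & k=0,\\[2pt] C_1(d,1)\sum_{q=1}^{p}C_2(q,d,1)\,\frac{1}{2(2q+1)}, & k=1,\\[2pt] C_1(d,k)\sum_{q=\lceil k/2\rceil}^{p}C_2(q,d,k)\,\frac{1}{2(2q-k+2)}\Big(1-\frac{1}{2^{2q-k+2}}\binom{2q-k+2}{\frac{2q-k+2}{2}}\Big), & k\ge2\text{ even},\\[2pt] 0,& k\ge3\text{ odd}.\end{cases}$$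
   Context: $P_{k,d}$ is the Gegenbauer polynomial (zonal harmonic of degree $k$ on $\mathbb{S}^d\subset\mathbb{R}^{d+1}$): $P_{k,d}(t)=\frac{(-1)^k}{2^k}\frac{\Gamma(\frac d2)}{\Gamma(k+\frac d2)}\frac{1}{(1-t^2)^{\frac{d-2}{2}}}\frac{d^k}{dt^k}(1-t^2)^{k+\frac{d-2}{2}}$. By the Funk–Hecke theorem, $a_k^d$ is (up to the fixed normalizing constant $V_d$, which is independent of $k$) the eigenvalue of convolution on $\mathbb{S}^d$ with $K^\infty$ on spherical harmonics of degree $k$. $\binom{p}{q}=0$ when $q>p$. *)

theory Defs
  imports "HOL-Analysis.Analysis"
begin

definition Kinf :: "real \<Rightarrow> real" where
  "Kinf t = (1 / (2 * pi)) * t * (pi - arccos t)"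

definition gegenbauer :: "nat \<Rightarrow> nat \<Rightarrow> real \<Rightarrow> real" where
  "gegenbauer k d t =
     ((-1) ^ k / 2 ^ k) * (Gamma (real d / 2) / Gamma (real k + real d / 2))
     * (1 / (1 - t\<^sup>2) powr ((real d - 2) / 2))
     * (deriv ^^ k) (\<lambda>s. (1 - s\<^sup>2) powr (real k + (real d - 2) / 2)) t"

definition Vd :: "nat \<Rightarrow> real" where
  "Vd d = pi powr (real d / 2) / Gamma (real d / 2 + 1)"

definition acoef :: "nat \<Rightarrow> nat \<Rightarrow> real" where
  "acoef k d = Vd d * integral {-1..1}
     (\<lambda>t. Kinf t * gegenbauer k d t * (1 - t\<^sup>2) powr ((real d - 2) / 2))"

definition C1 :: "nat \<Rightarrow> nat \<Rightarrow> real" where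
  "C1 d k = (pi powr (real d / 2) / (real d / 2)) * ((-1) ^ k / 2 ^ k) * (1 / Gamma (real k + real d / 2))"

text \<open>p = k + (d-2)/2, a natural number for even d.\<close>
definition pidx :: "nat \<Rightarrow> nat \<Rightarrow> nat" where
  "pidx d k = k + (d - 2) div 2"

definition C2 :: "nat \<Rightarrow> nat \<Rightarrow> nat \<Rightarrow> real" where
  "C2 q d k = (-1) ^ q * real (pidx d k choose q) * (fact (2 * q) / fact (2 * q - k))"

end

theory Submission
  imports Defs "HOL-Computational_Algebra.Polynomial"
begin

text \<open>
For even \<open>d = 2m + 2\<close> the weight \<open>(1 - t\<^sup>2)\<^sup>m\<close> cancels the denominator
of Rodrigues' formula, so on \<open>(-1, 1)\<close> the integrand of \<open>a\<^sub>k\<^sup>d\<close> is a constant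
multiple of \<open>Kinf t\<close> times the \<open>k\<close>-th derivative of the polynomial \<open>(1 - t\<^sup>2)\<^sup>p\<close>,
\<open>p = k + m\<close>. Expanding that polynomial reduces \<open>a\<^sub>k\<^sup>d\<close> to the moments of
\<open>Kinf\<close>. Since \<open>Kinf t = t (pi - arccos t) / (2 pi)\<close> and
\<open>arccos' t = -1 / sqrt (1 - t\<^sup>2)\<close>, one integration by parts turns each moment (and,
for \<open>k = 0\<close>, the integral of \<open>Kinf t (1 - t\<^sup>2)\<^sup>m\<close>) into a Wallis integral
\<open>\<integral> t\<^sup>n / sqrt (1 - t\<^sup>2)\<close>, which is \<open>0\<close> for odd \<open>n\<close> and
\<open>pi (n choose n/2) / 2\<^sup>n\<close> for even \<open>n\<close>.
For odd \<open>k\<close> only odd moments occur, and on these \<open>Kinf\<close> acts like \<open>t / 4\<close>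
(\<open>Kinf t - t / 4 = t arcsin t / (2 pi)\<close> is even); so the sum equals
\<open>\<integral> t / 4 D\<^sup>k (1 - t\<^sup>2)\<^sup>p\<close>, which vanishes after two further
integrations by parts because \<open>(1 - t\<^sup>2)\<^sup>p\<close> has roots of order \<open>p \<ge> k\<close> at \<open>\<plusminus>1\<close>.
\<close>

lemma fundamental_theorem_of_calculus_real_interior:
  fixes F f :: "real \<Rightarrow> real"
  assumes "a \<le> b" "continuous_on {a..b} F"
    and "\<And>x. a < x \<Longrightarrow> x < b \<Longrightarrow> (F has_real_derivative f x) (at x)"
  shows "(f has_integral (F b - F a)) {a..b}"
  using assms
  by (intro fundamental_theorem_of_calculus_interior)
     (auto simp: has_real_derivative_iff_has_vector_derivative)

lemma has_integral_power_real:
  fixes a b :: real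
  assumes "a \<le> b"
  shows "((\<lambda>t. t ^ n) has_integral (b ^ Suc n - a ^ Suc n) / real (Suc n)) {a..b}"
proof -
  have "((\<lambda>t. t ^ n) has_integral (b ^ Suc n / real (Suc n) - a ^ Suc n / real (Suc n))) {a..b}"
  proof (rule fundamental_theorem_of_calculus_real_interior[OF assms])
    show "continuous_on {a..b} (\<lambda>t. t ^ Suc n / real (Suc n))"
      by (intro continuous_intros) auto
    fix x :: real
    show "((\<lambda>t. t ^ Suc n / real (Suc n)) has_real_derivative x ^ n) (at x)"
      by (rule derivative_eq_intros refl | simp)+
  qed
  then show ?thesis by (simp add: diff_divide_distrib)
qed

lemma DERIV_sqrt_one_minus_square:
  assumes "-1 < x" "x < 1"
  shows "((\<lambda>t. sqrt (1 - t\<^sup>2)) has_real_derivative - x / sqrt (1 - x\<^sup>2)) (at x)"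
proof -
  have "0 < 1 - x\<^sup>2" using assms by (simp add: abs_square_less_1)
  then show ?thesis
    by (auto intro!: derivative_eq_intros simp: field_simps)
qed

section \<open>Wallis integrals\<close>

definition wallis_integral :: "nat \<Rightarrow> real" where
  "wallis_integral n = (if odd n then 0 else pi * real (n choose (n div 2)) / 2 ^ n)"

lemma wallis_integral_Suc_Suc:
  "wallis_integral (Suc (Suc n)) = (real n + 1) / (real n + 2) * wallis_integral n"
proof (cases "odd n")
  case True
  then show ?thesis by (simp add: wallis_integral_def)
next
  case False
  then obtain r where n: "n = 2 * r" by (auto elim: evenE)
  have central: "real ((2 * r + 2) choose (r + 1))
      = real ((2 * r) choose r) * (2 * (2 * real r + 1)) / (real r + 1)"
  proof -
    have binom: "real ((2 * r + 2) choose (r + 1)) = fact (2 * r + 2) / (fact (r + 1) * fact (r + 1))"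
        "real ((2 * r) choose r) = fact (2 * r) / (fact r * fact r)"
      by (simp_all add: binomial_fact del: binomial_Suc_Suc)
    have fact: "(fact (2 * r + 2) :: real) = 2 * (real r + 1) * (2 * real r + 1) * fact (2 * r)"
        "(fact (r + 1) :: real) = (real r + 1) * fact r"
      by (simp_all add: algebra_simps)
    show ?thesis
      unfolding binom fact by (simp add: divide_simps) (simp add: algebra_simps)
  qed
  have "wallis_integral (Suc (Suc n)) = pi * real ((2 * r + 2) choose (r + 1)) / (4 * 2 ^ (2 * r))"
    using n by (simp add: wallis_integral_def power_add del: binomial_Suc_Suc)
  also have "\<dots> = (real n + 1) / (real n + 2) * (pi * real ((2 * r) choose r) / 2 ^ (2 * r))"
    unfolding central n by (simp add: divide_simps) (simp add: algebra_simps)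
  also have "\<dots> = (real n + 1) / (real n + 2) * wallis_integral n"
    using n by (simp add: wallis_integral_def)
  finally show ?thesis .
qed

fun pow_div_sqrt_prim :: "nat \<Rightarrow> real \<Rightarrow> real" where
  "pow_div_sqrt_prim 0 t = arcsin t"
| "pow_div_sqrt_prim (Suc 0) t = - sqrt (1 - t\<^sup>2)"
| "pow_div_sqrt_prim (Suc (Suc n)) t =
     (real n + 1) / (real n + 2) * pow_div_sqrt_prim n t - t ^ (n + 1) * sqrt (1 - t\<^sup>2) / (real n + 2)"

lemma DERIV_pow_div_sqrt_prim:
  "-1 < x \<Longrightarrow> x < 1 \<Longrightarrow> (pow_div_sqrt_prim n has_real_derivative x ^ n / sqrt (1 - x\<^sup>2)) (at x)"
proof (induction n x rule: pow_div_sqrt_prim.induct)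
  case (1 x)
  then show ?case using DERIV_arcsin[of x] by (simp add: divide_inverse)
next
  case (2 x)
  then show ?case using DERIV_minus[OF DERIV_sqrt_one_minus_square[of x]] by (simp add: fun_eq_iff)
next
  case (3 n x)
  define w where "w = sqrt (1 - x\<^sup>2)"
  have "0 < 1 - x\<^sup>2" using 3 by (simp add: abs_square_less_1)
  then have w: "w > 0" "w * w = 1 - x * x" by (simp_all add: w_def power2_eq_square)
  have "((\<lambda>t. t ^ (n + 1) * sqrt (1 - t\<^sup>2)) has_real_derivative
      real (n + 1) * x ^ n * w + x ^ (n + 1) * (- x / w)) (at x)"
    using DERIV_mult[OF DERIV_pow[of "n + 1" x] DERIV_sqrt_one_minus_square[OF 3(2,3)]]
    by (simp add: w_def mult_ac)
  then have "(pow_div_sqrt_prim (Suc (Suc n)) has_real_derivative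
      (real n + 1) / (real n + 2) * (x ^ n / w)
      - (real (n + 1) * x ^ n * w + x ^ (n + 1) * (- x / w)) / (real n + 2)) (at x)"
    unfolding pow_div_sqrt_prim.simps(3)[abs_def] using 3(1)[OF 3(2,3)]
    by (intro DERIV_diff DERIV_cmult DERIV_cdivide) (auto simp: w_def)
  moreover have "(real n + 1) / (real n + 2) * (x ^ n / w)
      - (real (n + 1) * x ^ n * w + x ^ (n + 1) * (- x / w)) / (real n + 2) = x ^ Suc (Suc n) / w"
    using w by (simp add: divide_simps, simp add: mult.assoc, simp add: algebra_simps)
  ultimately show ?case by (simp add: w_def del: pow_div_sqrt_prim.simps)
qed

lemma continuous_on_pow_div_sqrt_prim: "continuous_on {-1..1} (pow_div_sqrt_prim n)"
proof (induction n rule: nat_induct2)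
  case 0
  then show ?case using continuous_on_arcsin' by (simp add: pow_div_sqrt_prim.simps(1)[abs_def])
next
  case 1
  show ?case unfolding One_nat_def pow_div_sqrt_prim.simps(2)[abs_def] by (intro continuous_intros)
next
  case (step n)
  then show ?case
    unfolding add_2_eq_Suc' pow_div_sqrt_prim.simps(3)[abs_def] by (intro continuous_intros) auto
qed

lemma pow_div_sqrt_prim_increment:
  "pow_div_sqrt_prim n 1 - pow_div_sqrt_prim n (-1) = wallis_integral n"
proof (induction n rule: nat_induct2)
  case (step n)
  have "pow_div_sqrt_prim (Suc (Suc n)) 1 - pow_div_sqrt_prim (Suc (Suc n)) (-1)
      = (real n + 1) / (real n + 2) * (pow_div_sqrt_prim n 1 - pow_div_sqrt_prim n (-1))"
    by (simp add: algebra_simps diff_divide_distrib)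
  with step show ?case by (simp add: wallis_integral_Suc_Suc)
qed (simp_all add: wallis_integral_def)

(* An improper integral; as a Henstock-Kurzweil integral it needs no limit, and the junk
   value 0 of the integrand at the endpoints (division by zero) is irrelevant. *)
lemma has_integral_power_div_sqrt:
  "((\<lambda>t. t ^ n / sqrt (1 - t\<^sup>2)) has_integral wallis_integral n) {-1..1}"
  unfolding pow_div_sqrt_prim_increment[symmetric]
  by (intro fundamental_theorem_of_calculus_real_interior continuous_on_pow_div_sqrt_prim
      DERIV_pow_div_sqrt_prim) auto

fun circ_pow_div_sqrt_prim :: "nat \<Rightarrow> real \<Rightarrow> real" where
  "circ_pow_div_sqrt_prim 0 t = arcsin t"
| "circ_pow_div_sqrt_prim (Suc r) t =
     ((2 * real r + 1) * circ_pow_div_sqrt_prim r t + t * sqrt (1 - t\<^sup>2) ^ (2 * r + 1)) / (2 * real r + 2)"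

lemma DERIV_circ_pow_div_sqrt_prim:
  assumes x: "-1 < x" "x < 1"
  shows "(circ_pow_div_sqrt_prim r has_real_derivative (1 - x\<^sup>2) ^ r / sqrt (1 - x\<^sup>2)) (at x)"
proof (induction r)
  case 0
  then show ?case using DERIV_arcsin[OF x] by (simp add: divide_inverse)
next
  case (Suc r)
  define w where "w = sqrt (1 - x\<^sup>2)"
  have "0 < 1 - x\<^sup>2" using x by (simp add: abs_square_less_1)
  then have w: "w > 0" "w * w = 1 - x * x" by (simp_all add: w_def power2_eq_square)
  have "((\<lambda>t. t * sqrt (1 - t\<^sup>2) ^ (2 * r + 1)) has_real_derivative
      w ^ (2 * r + 1) + real (2 * r + 1) * (- x / w) * w ^ (2 * r) * x) (at x)"
    using DERIV_mult[OF DERIV_ident DERIV_power[OF DERIV_sqrt_one_minus_square[OF x], of "2 * r + 1"]]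
    by (simp add: w_def mult_ac)
  then have "(circ_pow_div_sqrt_prim (Suc r) has_real_derivative
      ((2 * real r + 1) * ((1 - x\<^sup>2) ^ r / w)
       + (w ^ (2 * r + 1) + real (2 * r + 1) * (- x / w) * w ^ (2 * r) * x)) / (2 * real r + 2)) (at x)"
    unfolding circ_pow_div_sqrt_prim.simps(2)[abs_def] using Suc
    by (intro DERIV_cdivide DERIV_add DERIV_cmult) (auto simp: w_def)
  moreover have "((2 * real r + 1) * ((1 - x\<^sup>2) ^ r / w)
       + (w ^ (2 * r + 1) + real (2 * r + 1) * (- x / w) * w ^ (2 * r) * x)) / (2 * real r + 2)
     = (1 - x\<^sup>2) ^ Suc r / w"
  proof -
    define U where "U = (1 - x\<^sup>2) ^ r"
    have w2r: "w ^ (2 * r) = U"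
      using w(2) by (simp add: U_def power_mult power2_eq_square)
    have "w ^ (2 * r + 1) = U * (w * w) / w"
      using w(1) by (simp flip: w2r)
    then have "w ^ (2 * r + 1) = U * (1 - x * x) / w"
      by (simp only: w(2))
    moreover have "(1 - x\<^sup>2) ^ Suc r = (1 - x * x) * U"
      by (simp add: U_def power2_eq_square)
    ultimately show ?thesis
      unfolding w2r U_def[symmetric] using w
      by (simp add: divide_simps) (simp add: algebra_simps)
  qed
  ultimately show ?case by (simp add: w_def del: circ_pow_div_sqrt_prim.simps)
qed

lemma continuous_on_circ_pow_div_sqrt_prim: "continuous_on {-1..1} (circ_pow_div_sqrt_prim r)"
proof (induction r)
  case 0
  then show ?case using continuous_on_arcsin' by (simp add: circ_pow_div_sqrt_prim.simps(1)[abs_def])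
next
  case (Suc r)
  then show ?case unfolding circ_pow_div_sqrt_prim.simps(2)[abs_def] by (intro continuous_intros) auto
qed

lemma circ_pow_div_sqrt_prim_increment:
  "circ_pow_div_sqrt_prim r 1 - circ_pow_div_sqrt_prim r (-1) = wallis_integral (2 * r)"
proof (induction r)
  case (Suc r)
  have "circ_pow_div_sqrt_prim (Suc r) 1 - circ_pow_div_sqrt_prim (Suc r) (-1)
      = (2 * real r + 1) / (2 * real r + 2) * (circ_pow_div_sqrt_prim r 1 - circ_pow_div_sqrt_prim r (-1))"
    by (simp add: algebra_simps diff_divide_distrib)
  moreover have "2 * Suc r = Suc (Suc (2 * r))" by simp
  ultimately show ?case using Suc by (simp only: wallis_integral_Suc_Suc) simp
qed (simp add: wallis_integral_def)

lemma has_integral_circ_power_div_sqrt: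
  "((\<lambda>t. (1 - t\<^sup>2) ^ r / sqrt (1 - t\<^sup>2)) has_integral wallis_integral (2 * r)) {-1..1}"
  unfolding circ_pow_div_sqrt_prim_increment[symmetric]
  by (intro fundamental_theorem_of_calculus_real_interior continuous_on_circ_pow_div_sqrt_prim
      DERIV_circ_pow_div_sqrt_prim) auto

section \<open>Moments of \<open>Kinf\<close>\<close>

lemma has_integral_Kinf_by_parts:
  fixes f F :: "real \<Rightarrow> real"
  assumes cont: "continuous_on {-1..1} F"
    and deriv: "\<And>x. -1 < x \<Longrightarrow> x < 1 \<Longrightarrow> (F has_real_derivative x * f x) (at x)"
    and W: "((\<lambda>t. F t / sqrt (1 - t\<^sup>2)) has_integral W) {-1..1}"
  shows "((\<lambda>t. Kinf t * f t) has_integral (F 1 / 2 - W / (2 * pi))) {-1..1}"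
proof -
  have "((\<lambda>t. F t / sqrt (1 - t\<^sup>2) + 2 * pi * (Kinf t * f t)) has_integral
      ((pi - arccos 1) * F 1 - (pi - arccos (-1)) * F (-1))) {-1..1}"
  proof (rule fundamental_theorem_of_calculus_real_interior)
    show "continuous_on {-1..1} (\<lambda>t. (pi - arccos t) * F t)"
      by (intro continuous_intros continuous_on_arccos' cont)
    fix x :: real assume x: "-1 < x" "x < 1"
    have "((\<lambda>t. (pi - arccos t) * F t) has_real_derivative
        inverse (sqrt (1 - x\<^sup>2)) * F x + (pi - arccos x) * (x * f x)) (at x)"
      using DERIV_mult[OF DERIV_diff[OF DERIV_const[of pi] DERIV_arccos] deriv[OF x]] x
      by (simp add: mult_ac)
    moreover have "2 * pi * (Kinf x * f x) = (pi - arccos x) * (x * f x)"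
      unfolding Kinf_def by (simp only: mult_ac) simp
    ultimately show "((\<lambda>t. (pi - arccos t) * F t) has_real_derivative
        F x / sqrt (1 - x\<^sup>2) + 2 * pi * (Kinf x * f x)) (at x)"
      by (simp only: divide_inverse mult.commute)
  qed simp
  from has_integral_diff[OF this W]
  have "((\<lambda>t. 2 * pi * (Kinf t * f t)) has_integral (pi * F 1 - W)) {-1..1}"
    by simp
  from has_integral_mult_right[OF this, of "1 / (2 * pi)"]
  show ?thesis by (simp add: field_simps)
qed

lemma has_integral_Kinf_power:
  "((\<lambda>t. Kinf t * t ^ n) has_integral
     (1 / (2 * (real n + 2)) - wallis_integral (n + 2) / (2 * pi * (real n + 2)))) {-1..1}"
proof -
  define F where "F t = t ^ (n + 2) / (real n + 2)" for t
  have "continuous_on {-1..1} F"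
    unfolding F_def by (intro continuous_intros) auto
  moreover have "(F has_real_derivative x * x ^ n) (at x)" for x
    unfolding F_def[abs_def]
    by (rule derivative_eq_intros refl | simp add: divide_simps | simp add: algebra_simps)+
  moreover have "((\<lambda>t. F t / sqrt (1 - t\<^sup>2)) has_integral wallis_integral (n + 2) / (real n + 2)) {-1..1}"
    using has_integral_divide[OF has_integral_power_div_sqrt[of "n + 2"], of "real n + 2"]
    by (simp add: F_def field_simps)
  ultimately have "((\<lambda>t. Kinf t * t ^ n) has_integral
      (F 1 / 2 - wallis_integral (n + 2) / (real n + 2) / (2 * pi))) {-1..1}"
    by (rule has_integral_Kinf_by_parts)
  then show ?thesis by (simp add: F_def field_simps)
qed

definition Kinf_moment :: "nat \<Rightarrow> real" where
  "Kinf_moment n = integral {-1..1} (\<lambda>t. Kinf t * t ^ n)"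

lemma Kinf_moment_eq:
  "Kinf_moment n = 1 / (2 * (real n + 2)) - wallis_integral (n + 2) / (2 * pi * (real n + 2))"
  unfolding Kinf_moment_def using has_integral_Kinf_power by (rule integral_unique)

lemma has_integral_Kinf_moment: "((\<lambda>t. Kinf t * t ^ n) has_integral Kinf_moment n) {-1..1}"
  unfolding Kinf_moment_eq by (rule has_integral_Kinf_power)

lemma Kinf_moment_odd: "odd n \<Longrightarrow> Kinf_moment n = 1 / (2 * (real n + 2))"
  by (simp add: Kinf_moment_eq wallis_integral_def)

lemma Kinf_moment_even:
  assumes "even n"
  shows "Kinf_moment n =
    1 / (2 * real (n + 2)) * (1 - 1 / 2 ^ (n + 2) * real ((n + 2) choose ((n + 2) div 2)))"
proof -
  define B where "B = real ((n + 2) choose ((n + 2) div 2))"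
  have W: "wallis_integral (n + 2) = pi * B / 2 ^ (n + 2)"
    using assms by (simp add: wallis_integral_def B_def del: binomial_Suc_Suc)
  show ?thesis
    unfolding B_def[symmetric] Kinf_moment_eq W using pi_gt_zero
    by (simp add: divide_simps) (simp add: algebra_simps)
qed

lemma has_integral_Kinf_circ_power:
  "((\<lambda>t. Kinf t * (1 - t\<^sup>2) ^ m) has_integral
     real ((2 * m + 2) choose (m + 1)) / ((2 * real m + 2) * 2 ^ (2 * m + 3))) {-1..1}"
proof -
  define F where "F t = - ((1 - t\<^sup>2) ^ (m + 1)) / (2 * real m + 2)" for t
  define W where "W = - wallis_integral (2 * (m + 1)) / (2 * real m + 2)"
  have "continuous_on {-1..1} F"
    unfolding F_def by (intro continuous_intros) auto
  moreover have "(F has_real_derivative x * (1 - x\<^sup>2) ^ m) (at x)" for x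
    unfolding F_def[abs_def]
    by (rule derivative_eq_intros refl | simp add: divide_simps | simp add: algebra_simps)+
  moreover have "((\<lambda>t. F t / sqrt (1 - t\<^sup>2)) has_integral W) {-1..1}"
    using has_integral_divide[OF has_integral_neg[OF has_integral_circ_power_div_sqrt[of "m + 1"]],
        of "2 * real m + 2"]
    by (simp add: F_def W_def mult.commute)
  ultimately have "((\<lambda>t. Kinf t * (1 - t\<^sup>2) ^ m) has_integral
      (F 1 / 2 - W / (2 * pi))) {-1..1}"
    by (rule has_integral_Kinf_by_parts)
  also have "F 1 / 2 - W / (2 * pi)
      = real ((2 * m + 2) choose (m + 1)) / ((2 * real m + 2) * 2 ^ (2 * m + 3))"
  proof -
    define B where "B = real ((2 * m + 2) choose (m + 1))"
    have wallis: "wallis_integral (2 * (m + 1)) = pi * B / 2 ^ (2 * m + 2)"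
      by (simp add: wallis_integral_def B_def del: binomial_Suc_Suc)
    show ?thesis
      unfolding F_def W_def wallis B_def[symmetric] using pi_gt_zero
      by (simp add: power_add divide_simps)
  qed
  finally show ?thesis .
qed

section \<open>Derivatives of \<open>(1 - t\<^sup>2)\<^sup>p\<close>\<close>

lemma higher_deriv_poly: "(deriv ^^ k) (poly p) = poly ((pderiv ^^ k) (p :: real poly))"
proof (induction k)
  case (Suc k)
  have "deriv (poly q) = poly (pderiv q)" for q :: "real poly"
    by (rule ext, rule DERIV_imp_deriv, rule poly_DERIV)
  with Suc show ?case by simp
qed simp

lemma higher_pderiv_monom_fact:
  fixes c :: "'a :: field_char_0"
  shows "(pderiv ^^ k) (monom c n) =
    (if k \<le> n then monom (c * fact n / fact (n - k)) (n - k) else 0)"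
proof (induction k)
  case (Suc k)
  show ?case
  proof (cases "Suc k \<le> n")
    case True
    then have "fact (n - k) = (of_nat (n - k) * fact (n - Suc k) :: 'a)"
      by (metis Suc_diff_le diff_Suc_Suc fact_Suc le_SucI)
    with True Suc show ?thesis by (simp add: pderiv_monom field_simps)
  qed (use Suc in \<open>auto simp: pderiv_monom\<close>)
qed simp

lemma one_minus_square_power_eq_sum:
  "[:1, 0, -1:] ^ p = (\<Sum>q\<le>p. monom ((-1) ^ q * real (p choose q)) (2 * q))"
proof -
  have "poly ([:1, 0, -1:] ^ p) x = poly (\<Sum>q\<le>p. monom ((-1) ^ q * real (p choose q)) (2 * q)) x"
    for x :: real
  proof -
    have "poly ([:1, 0, -1:] ^ p) x = (- (x\<^sup>2) + 1) ^ p"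
      by (simp add: poly_power power2_eq_square)
    also have "\<dots> = (\<Sum>q\<le>p. real (p choose q) * (- (x\<^sup>2)) ^ q * 1 ^ (p - q))"
      by (rule binomial_ring)
    also have "\<dots> = poly (\<Sum>q\<le>p. monom ((-1) ^ q * real (p choose q)) (2 * q)) x"
      unfolding poly_sum poly_monom
    proof (intro sum.cong refl)
      fix q
      have "(- (x\<^sup>2)) ^ q = (-1) ^ q * x ^ (2 * q)"
        by (metis power_minus power_mult)
      then show "real (p choose q) * (- (x\<^sup>2)) ^ q * 1 ^ (p - q)
          = (-1) ^ q * real (p choose q) * x ^ (2 * q)"
        by simp
    qed
    finally show ?thesis .
  qed
  then show ?thesis by (simp add: poly_eq_poly_eq_iff[symmetric] fun_eq_iff)
qed

definition rodrigues_poly :: "nat \<Rightarrow> nat \<Rightarrow> real poly" where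
  "rodrigues_poly k p = (pderiv ^^ k) ([:1, 0, -1:] ^ p)"

lemma poly_rodrigues_poly:
  "poly (rodrigues_poly k p) t =
    (\<Sum>q = (k + 1) div 2..p.
      (-1) ^ q * real (p choose q) * (fact (2 * q) / fact (2 * q - k)) * t ^ (2 * q - k))"
proof -
  define c where "c q = (-1) ^ q * real (p choose q) * (fact (2 * q) / fact (2 * q - k))" for q
  have "poly (rodrigues_poly k p) t = (\<Sum>q\<le>p. if k \<le> 2 * q then c q * t ^ (2 * q - k) else 0)"
    unfolding rodrigues_poly_def one_minus_square_power_eq_sum higher_pderiv_sum poly_sum
      higher_pderiv_monom_fact
    by (intro sum.cong) (simp_all add: poly_monom c_def)
  also have "\<dots> = (\<Sum>q\<in>{q\<in>{..p}. k \<le> 2 * q}. c q * t ^ (2 * q - k))"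
    by (rule sum.inter_filter[symmetric]) simp
  also have "{q\<in>{..p}. k \<le> 2 * q} = {(k + 1) div 2..p}"
    by auto
  finally show ?thesis by (simp only: c_def)
qed

lemma pderiv_linear_power_dvd:
  fixes p :: "'a :: idom poly"
  assumes "[:-a, 1:] ^ Suc n dvd p"
  shows "[:-a, 1:] ^ n dvd pderiv p"
proof -
  obtain r where p: "p = [:-a, 1:] ^ Suc n * r" using assms by (elim dvdE)
  have "pderiv p = [:-a, 1:] ^ n * (smult (of_nat (Suc n)) (pderiv [:-a, 1:]) * r + [:-a, 1:] * pderiv r)"
    unfolding p pderiv_mult pderiv_power_Suc by (simp add: algebra_simps)
  then show ?thesis by simp
qed

lemma higher_pderiv_linear_power_dvd:
  fixes p :: "'a :: idom poly"
  shows "[:-a, 1:] ^ (n + j) dvd p \<Longrightarrow> [:-a, 1:] ^ n dvd (pderiv ^^ j) p"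
proof (induction j arbitrary: n)
  case (Suc j)
  from Suc.prems have "[:-a, 1:] ^ (Suc n + j) dvd p"
    by (simp only: add_Suc_shift)
  from pderiv_linear_power_dvd[OF Suc.IH[OF this]] show ?case
    by simp
qed simp

lemma poly_higher_pderiv_eq_0_if_root_order:
  fixes p :: "'a :: idom poly"
  assumes "[:-a, 1:] ^ n dvd p" "j < n"
  shows "poly ((pderiv ^^ j) p) a = 0"
proof -
  have "[:-a, 1:] ^ Suc (n - Suc j) dvd (pderiv ^^ j) p"
    using assms by (intro higher_pderiv_linear_power_dvd) (simp add: Suc_diff_Suc)
  then have "[:-a, 1:] dvd (pderiv ^^ j) p"
    using dvd_trans dvd_power by blast
  then show ?thesis by (simp add: poly_eq_0_iff_dvd)
qed

lemma linear_power_dvd_one_minus_square_power: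
  assumes "a = 1 \<or> a = (-1 :: 'a :: comm_ring_1)"
  shows "[:-a, 1:] ^ p dvd [:1, 0, -1:] ^ p"
proof -
  have "[:1, 0, -1:] = [:-a, 1:] * [:-a, -1:]"
    using assms by auto
  then have "[:-a, 1:] dvd [:1, 0, -1:]"
    by (rule dvdI)
  then show ?thesis by (rule dvd_power_same)
qed

lemma has_integral_x_times_higher_pderiv_eq_0:
  fixes p :: "real poly"
  assumes "\<forall>a\<in>{-1, 1}. poly ((pderiv ^^ j) p) a = 0 \<and> poly ((pderiv ^^ Suc j) p) a = 0"
  shows "((\<lambda>t. t * poly ((pderiv ^^ Suc (Suc j)) p) t) has_integral 0) {-1..1}"
proof -
  define F where "F t = t * poly ((pderiv ^^ Suc j) p) t - poly ((pderiv ^^ j) p) t" for t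
  have "((\<lambda>t. t * poly ((pderiv ^^ Suc (Suc j)) p) t) has_integral (F 1 - F (-1))) {-1..1}"
  proof (rule fundamental_theorem_of_calculus_real_interior)
    show "continuous_on {-1..1} F" unfolding F_def by (intro continuous_intros)
    fix x :: real
    show "(F has_real_derivative x * poly ((pderiv ^^ Suc (Suc j)) p) x) (at x)"
      unfolding F_def[abs_def]
      by (rule derivative_eq_intros poly_DERIV refl | simp)+
  qed simp
  moreover have "F 1 = 0" "F (-1) = 0"
    using assms by (simp_all add: F_def)
  ultimately show ?thesis by simp
qed

lemma has_integral_x_times_poly_rodrigues_poly_eq_0:
  assumes "2 \<le> k" "k \<le> p"
  shows "((\<lambda>t. t * poly (rodrigues_poly k p) t) has_integral 0) {-1..1}"
proof -
  obtain j where k: "k = Suc (Suc j)"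
    using assms(1) by (metis add_2_eq_Suc le_Suc_ex)
  show ?thesis
    unfolding rodrigues_poly_def k
  proof (rule has_integral_x_times_higher_pderiv_eq_0, intro ballI conjI)
    fix a :: real assume "a \<in> {-1, 1}"
    then have "[:-a, 1:] ^ p dvd [:1, 0, -1:] ^ p"
      by (intro linear_power_dvd_one_minus_square_power) auto
    note vanish = poly_higher_pderiv_eq_0_if_root_order[OF this]
    have "j < p" "Suc j < p" using assms(2) k by auto
    then show "poly ((pderiv ^^ j) ([:1, 0, -1:] ^ p)) a = 0"
      "poly ((pderiv ^^ Suc j) ([:1, 0, -1:] ^ p)) a = 0"
      by (simp_all only: vanish)
  qed
qed

lemma Kinf_moment_sum_odd_eq_0:
  assumes "odd k" "2 \<le> k" "k \<le> p"
  shows "(\<Sum>q = (k + 1) div 2..p.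
    (-1) ^ q * real (p choose q) * (fact (2 * q) / fact (2 * q - k)) * Kinf_moment (2 * q - k)) = 0"
proof -
  define c where "c q = (-1) ^ q * real (p choose q) * (fact (2 * q) / fact (2 * q - k))" for q
  define A where "A = {(k + 1) div 2..p}"
  have "((\<lambda>t. \<Sum>q\<in>A. c q * t ^ (2 * q - k + 1)) has_integral
      (\<Sum>q\<in>A. c q * (2 / (real (2 * q - k) + 2)))) {-1..1}"
  proof (intro has_integral_sum has_integral_mult_right)
    fix q assume "q \<in> A"
    then have "even (2 * q - k + 1)" using assms(1) by (auto simp: A_def)
    then show "((\<lambda>t. t ^ (2 * q - k + 1)) has_integral 2 / (real (2 * q - k) + 2)) {-1..1}"
      using has_integral_power_real[of "-1" 1 "2 * q - k + 1"] by (simp add: add.commute)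
  qed (simp add: A_def)
  moreover have "(\<lambda>t. \<Sum>q\<in>A. c q * t ^ (2 * q - k + 1)) = (\<lambda>t. t * poly (rodrigues_poly k p) t)"
    by (simp add: poly_rodrigues_poly A_def c_def sum_distrib_left mult_ac)
  ultimately have "((\<lambda>t. t * poly (rodrigues_poly k p) t) has_integral
      (\<Sum>q\<in>A. c q * (2 / (real (2 * q - k) + 2)))) {-1..1}"
    by simp
  then have sum_eq_0: "(\<Sum>q\<in>A. c q * (2 / (real (2 * q - k) + 2))) = 0"
    using has_integral_x_times_poly_rodrigues_poly_eq_0[OF assms(2,3)] by (rule has_integral_unique)
  have moment: "Kinf_moment (2 * q - k) = 1 / 4 * (2 / (real (2 * q - k) + 2))" if "q \<in> A" for q
  proof -
    have "odd (2 * q - k)" using that assms(1) by (auto simp: A_def)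
    then show ?thesis by (simp add: Kinf_moment_odd)
  qed
  have "(\<Sum>q\<in>A. c q * Kinf_moment (2 * q - k))
      = 1 / 4 * (\<Sum>q\<in>A. c q * (2 / (real (2 * q - k) + 2)))"
    unfolding sum_distrib_left by (intro sum.cong) (simp_all add: moment)
  then show ?thesis
    unfolding sum_eq_0 by (simp add: A_def c_def)
qed

section \<open>The coefficients \<open>a\<^sub>k\<^sup>d\<close>\<close>

lemma Vd_mult_gegenbauer_const:
  assumes "d \<ge> 2"
  shows "Vd d * ((-1) ^ k / 2 ^ k * (Gamma (real d / 2) / Gamma (real k + real d / 2))) = C1 d k"
proof -
  have pos: "real d / 2 > 0" using assms by simp
  then have Gamma: "Gamma (real d / 2 + 1) = real d / 2 * Gamma (real d / 2)"
    by (intro Gamma_plus1) (auto elim: nonpos_Ints_cases)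
  have "Gamma (real d / 2) \<noteq> 0"
    using pos by (simp add: Gamma_real_pos less_imp_neq[symmetric])
  then show ?thesis
    unfolding Vd_def C1_def Gamma using pos by (simp add: divide_simps)
qed

lemma gegenbauer_mult_weight_eq_rodrigues_poly:
  assumes "even d" "d \<ge> 2" "-1 < t" "t < 1"
  shows "gegenbauer k d t * (1 - t\<^sup>2) powr ((real d - 2) / 2) =
    (-1) ^ k / 2 ^ k * (Gamma (real d / 2) / Gamma (real k + real d / 2))
    * poly (rodrigues_poly k (pidx d k)) t"
proof -
  obtain m where d: "d = 2 * m + 2"
    using assms(1,2) by (intro that[of "d div 2 - 1"]) presburger
  have weight: "(real d - 2) / 2 = real m" and exponent: "real k + (real d - 2) / 2 = real (pidx d k)"
    using d by (simp_all add: pidx_def)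
  have "eventually (\<lambda>s. s \<in> {-1<..<1}) (nhds t)"
    using assms(3,4) by (intro eventually_nhds_in_open) auto
  then have "eventually (\<lambda>s. (1 - s\<^sup>2) powr real (pidx d k) = poly ([:1, 0, -1:] ^ pidx d k) s) (nhds t)"
  proof eventually_elim
    case (elim s)
    then have "0 < 1 - s\<^sup>2" by (auto simp: abs_square_less_1)
    then show ?case by (simp add: powr_realpow poly_power power2_eq_square)
  qed
  then have "(deriv ^^ k) (\<lambda>s. (1 - s\<^sup>2) powr real (pidx d k)) t
      = poly (rodrigues_poly k (pidx d k)) t"
    unfolding rodrigues_poly_def higher_deriv_poly[symmetric] by (rule higher_deriv_cong_ev) simp
  moreover have "0 < 1 - t\<^sup>2"
    using assms(3,4) by (auto simp: abs_square_less_1)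
  then have "(1 - t\<^sup>2) powr real m = (1 - t\<^sup>2) ^ m" "(1 - t\<^sup>2) ^ m \<noteq> 0"
    by (simp_all add: powr_realpow)
  ultimately show ?thesis
    unfolding gegenbauer_def exponent unfolding weight by simp
qed

lemma acoef_eq_C1_mult_integral:
  assumes "even d" "d \<ge> 2"
    and I: "((\<lambda>t. Kinf t * poly (rodrigues_poly k (pidx d k)) t) has_integral I) {-1..1}"
  shows "acoef k d = C1 d k * I"
proof -
  define c where "c = (-1) ^ k / 2 ^ k * (Gamma (real d / 2) / Gamma (real k + real d / 2))"
  have "((\<lambda>t. Kinf t * gegenbauer k d t * (1 - t\<^sup>2) powr ((real d - 2) / 2)) has_integral c * I) {-1..1}"
  proof (rule has_integral_spike_finite[of "{-1, 1}"])
    show "((\<lambda>t. c * (Kinf t * poly (rodrigues_poly k (pidx d k)) t)) has_integral c * I) {-1..1}"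
      by (rule has_integral_mult_right[OF I])
    fix t :: real assume "t \<in> {-1..1} - {-1, 1}"
    then have "-1 < t" "t < 1" by auto
    from gegenbauer_mult_weight_eq_rodrigues_poly[OF assms(1,2) this, of k]
    show "Kinf t * gegenbauer k d t * (1 - t\<^sup>2) powr ((real d - 2) / 2) =
        c * (Kinf t * poly (rodrigues_poly k (pidx d k)) t)"
      by (simp add: c_def mult_ac)
  qed simp
  from integral_unique[OF this] show ?thesis
    unfolding acoef_def Vd_mult_gegenbauer_const[OF assms(2), of k, folded c_def, symmetric]
    by (simp add: mult.assoc)
qed

lemma acoef_eq_Kinf_moment_sum:
  assumes "even d" "d \<ge> 2"
  shows "acoef k d = C1 d k * (\<Sum>q = (k + 1) div 2..pidx d k. C2 q d k * Kinf_moment (2 * q - k))"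
proof (rule acoef_eq_C1_mult_integral[OF assms])
  have "((\<lambda>t. \<Sum>q = (k + 1) div 2..pidx d k. C2 q d k * (Kinf t * t ^ (2 * q - k))) has_integral
      (\<Sum>q = (k + 1) div 2..pidx d k. C2 q d k * Kinf_moment (2 * q - k))) {-1..1}"
    by (intro has_integral_sum has_integral_mult_right has_integral_Kinf_moment) simp
  then show "((\<lambda>t. Kinf t * poly (rodrigues_poly k (pidx d k)) t) has_integral
      (\<Sum>q = (k + 1) div 2..pidx d k. C2 q d k * Kinf_moment (2 * q - k))) {-1..1}"
    by (simp add: poly_rodrigues_poly C2_def sum_distrib_left mult_ac)
qed

lemma acoef_0:
  assumes "even d" "d \<ge> 2"
  shows "acoef 0 d = C1 d 0 * (1 / (real d * 2 ^ (d + 1))) * real (d choose (d div 2))"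
proof -
  obtain m where d: "d = 2 * m + 2"
    using assms by (intro that[of "d div 2 - 1"]) presburger
  have "poly (rodrigues_poly 0 (pidx d 0)) t = (1 - t\<^sup>2) ^ m" for t
    by (simp add: rodrigues_poly_def pidx_def d poly_power power2_eq_square)
  then have "((\<lambda>t. Kinf t * poly (rodrigues_poly 0 (pidx d 0)) t) has_integral
      real ((2 * m + 2) choose (m + 1)) / ((2 * real m + 2) * 2 ^ (2 * m + 3))) {-1..1}"
    using has_integral_Kinf_circ_power[of m] by simp
  moreover have "2 * m + 2 = d" "m + 1 = d div 2" "2 * real m + 2 = real d" "2 * m + 3 = d + 1"
    using d by auto
  ultimately have "((\<lambda>t. Kinf t * poly (rodrigues_poly 0 (pidx d 0)) t) has_integral
      1 / (real d * 2 ^ (d + 1)) * real (d choose (d div 2))) {-1..1}"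
    by (simp del: binomial_Suc_Suc)
  from acoef_eq_C1_mult_integral[OF assms this] show ?thesis
    by (simp only: mult.assoc)
qed

lemma acoef_1:
  assumes "even d" "d \<ge> 2"
  shows "acoef 1 d = C1 d 1 * (\<Sum>q = 1..pidx d 1. C2 q d 1 * (1 / (2 * (2 * real q + 1))))"
proof -
  have "Kinf_moment (2 * q - 1) = 1 / (2 * (2 * real q + 1))" if "q \<in> {1..pidx d 1}" for q
    using that by (simp add: Kinf_moment_odd of_nat_diff)
  then show ?thesis
    unfolding acoef_eq_Kinf_moment_sum[OF assms] by simp
qed

lemma acoef_even:
  assumes "even d" "d \<ge> 2" "even k" "k \<noteq> 0"
  shows "acoef k d = C1 d k * (\<Sum>q = (k + 1) div 2..pidx d k.
    C2 q d k * (1 / (2 * real (2 * q - k + 2)))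
    * (1 - (1 / 2 ^ (2 * q - k + 2)) * real ((2 * q - k + 2) choose ((2 * q - k + 2) div 2))))"
proof -
  have "Kinf_moment (2 * q - k) = 1 / (2 * real (2 * q - k + 2))
      * (1 - (1 / 2 ^ (2 * q - k + 2)) * real ((2 * q - k + 2) choose ((2 * q - k + 2) div 2)))"
    if "q \<in> {(k + 1) div 2..pidx d k}" for q
    using that assms(3,4) by (intro Kinf_moment_even) auto
  then show ?thesis
    unfolding acoef_eq_Kinf_moment_sum[OF assms(1,2)] by (simp only: mult.assoc cong: sum.cong)
qed

lemma acoef_odd:
  assumes "even d" "d \<ge> 2" "odd k" "k \<noteq> 1"
  shows "acoef k d = 0"
proof -
  have "2 \<le> k" "k \<le> pidx d k"
    using assms(3,4) by (auto simp: pidx_def elim: oddE)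
  note vanish = Kinf_moment_sum_odd_eq_0[OF assms(3) this]
  show ?thesis
    unfolding acoef_eq_Kinf_moment_sum[OF assms(1,2)] C2_def vanish by simp
qed

theorem mainTheorem6:
  fixes d k :: nat
  assumes "even d" and "d \<ge> 2"
  shows "acoef k d =
    (if k = 0 then
       C1 d 0 * (1 / (real d * 2 ^ (d + 1))) * real (d choose (d div 2))
     else if k = 1 then
       C1 d 1 * (\<Sum>q = 1..pidx d 1. C2 q d 1 * (1 / (2 * (2 * real q + 1))))
     else if even k then
       C1 d k * (\<Sum>q = (k + 1) div 2..pidx d k.
          C2 q d k * (1 / (2 * real (2 * q - k + 2)))
          * (1 - (1 / 2 ^ (2 * q - k + 2)) * real ((2 * q - k + 2) choose ((2 * q - k + 2) div 2))))
     else 0)"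
proof -
  consider "k = 0" | "k = 1" | "even k" "k \<noteq> 0" | "odd k" "k \<noteq> 1"
    by auto
  then show ?thesis
  proof cases
    case 1
    then show ?thesis using acoef_0[OF assms] by simp
  next
    case 2
    then show ?thesis using acoef_1[OF assms] by simp
  next
    case 3
    moreover have "k \<noteq> 1" using 3 by auto
    ultimately show ?thesis using acoef_even[OF assms 3] by simp
  next
    case 4
    moreover have "k \<noteq> 0" using 4 by (auto elim: oddE)
    ultimately show ?thesis using acoef_odd[OF assms 4] by simp
  qed
qed

end
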